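(* Let $n$, $k$, $t$ be positive integers with $k\geq t+1$ and $n\geq 2k$, and let $V$ be an $n$-dimensional vector space over $\mathbb{F}_q$. Suppose $\mathcal{F}\subseteq{V\brack k}$ is almost $t$-intersecting. If $A$ is a subspace of $V$ with $\dim(A)<\tau_t(\mathcal{F})\leq k$, then $$|\mathcal{F}_A|\leq{k-t+1\brack 1}^{\tau_t(\mathcal{F})-\dim(A)}{n-\tau_t(\mathcal{F})\brack k-\tau_t(\mathcal{F})}+\sum_{i=0}^{\tau_t(\mathcal{F})-\dim(A)-1}{k-t+1\brack 1}^{i}.$$
   Context: $q$ is a prime power; ${W\brack k}$ is the set of $k$-dimensional subspaces of $W$ and ${m\brack r}$ the Gaussian binomial coefficient $\prod_{i=0}^{r-1}\frac{q^{m-i}-1}{q^{r-i}-1}$ (equal to $1$ for $r=0$). A family $\mathcal{F}\subseteq{V\brack k}$ is almost $t$-intersecting if for each $F\in\mathcal{F}$ there is at most one $F'\in\mathcal{F}$ with $\dim(F\cap F')<t$. A subspace $W$ is a $t$-cover of $\mathcal{F}$ if $\dim(W\cap F)\geq t$ for all $F\in\mathcal{F}$; $\tau_t(\mathcal{F})$ is the minimum dimension of a $t$-cover of $\mathcal{F}$. $\mathcal{F}_A=\{F\in\mathcal{F}: A\subseteq F\}$. *)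

theory Defs
  imports "HOL-Analysis.Analysis"
begin

text \<open>Ambient space: V = 'a ^ 'n, where 'a is a finite field (so q = CARD('a)
  is a prime power) and n = CARD('n).\<close>

definition gaussian_binom :: "nat \<Rightarrow> nat \<Rightarrow> nat \<Rightarrow> real" where
  "gaussian_binom q m r =
     (\<Prod>i<r. (real q ^ (m - i) - 1) / (real q ^ (r - i) - 1))"

definition subspaces_of_dim :: "nat \<Rightarrow> ('a::field ^ 'n) set set" where
  "subspaces_of_dim k = {W. vec.subspace W \<and> vec.dim W = k}"

definition almost_t_intersecting :: "nat \<Rightarrow> ('a::field ^ 'n) set set \<Rightarrow> bool" where
  "almost_t_intersecting t \<F> \<longleftrightarrow>
     (\<forall>F\<in>\<F>. card {F'\<in>\<F>. vec.dim (F \<inter> F') < t} \<le> 1)"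

definition is_t_cover :: "nat \<Rightarrow> ('a::field ^ 'n) set set \<Rightarrow> ('a ^ 'n) set \<Rightarrow> bool" where
  "is_t_cover t \<F> W \<longleftrightarrow> vec.subspace W \<and> (\<forall>F\<in>\<F>. vec.dim (W \<inter> F) \<ge> t)"

definition tau :: "nat \<Rightarrow> ('a::field ^ 'n) set set \<Rightarrow> nat" where
  "tau t \<F> = (LEAST d. \<exists>W. is_t_cover t \<F> W \<and> vec.dim W = d)"

definition family_containing :: "('a::field ^ 'n) set set \<Rightarrow> ('a ^ 'n) set \<Rightarrow> ('a ^ 'n) set set" where
  "family_containing \<F> A = {F\<in>\<F>. A \<subseteq> F}"

end

theory Submission
  imports Defs
begin

(* Induction on tau - dim A. If A is not a t-cover, some F0 in the family meets A in dimension
   less than t, so F0 contains a subspace P of dimension k - t + 1 meeting A only in 0. A dimension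
   count inside F0 shows that every member G with dim (F0 \<inter> G) \<ge> t meets P nontrivially, so G
   contains A + <x> for some nonzero x in P. By almost t-intersection at most one member through A
   is not of this kind, and the spaces A + <x> have dimension dim A + 1 and are at most
   [k - t + 1, 1]_q in number (one per 1-dimensional subspace of P). Hence the bound b(m) for
   dim A = tau - m satisfies b(m + 1) = 1 + [k - t + 1, 1]_q * b(m), starting from the number
   [n - tau, k - tau]_q of all k-spaces through a tau-dimensional space. *)

lemma card_field_ge_2:
  assumes "finite (UNIV :: 'a::field set)"
  shows "CARD('a) \<ge> 2"
proof -
  have "card {0::'a, 1} \<le> CARD('a)" by (rule card_mono) (use assms in auto)
  then show ?thesis by simp
qed

lemma card_mult_le_of_fibres_ge:
  assumes "finite D" and "finite T"
    and "\<And>y. y \<in> T \<Longrightarrow> m \<le> card {x\<in>D. f x = y}"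
  shows "card T * m \<le> card D"
proof -
  have "card T * m \<le> (\<Sum>y\<in>T. card {x\<in>D. f x = y})"
    using assms(3) sum_mono[of T "\<lambda>_. m"] by simp
  also have "\<dots> = card (\<Union>y\<in>T. {x\<in>D. f x = y})"
    by (rule card_UN_disjoint[symmetric]) (use assms in auto)
  also have "\<dots> \<le> card D" by (rule card_mono) (use assms in auto)
  finally show ?thesis .
qed

lemma gaussian_binom_1: "gaussian_binom q m 1 = (real q ^ m - 1) / (real q - 1)"
  unfolding gaussian_binom_def by simp

lemma gaussian_binom_nonneg:
  assumes "q \<ge> 1"
  shows "gaussian_binom q m r \<ge> 0"
  unfolding gaussian_binom_def using assms by (intro prod_nonneg) simp

lemma gaussian_binom_eq_prod_quotient:
  assumes q: "q \<ge> 2" and "d \<le> k" "k \<le> n"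
  shows "gaussian_binom q (n - d) (k - d)
    = (\<Prod>i<k - d. real (q ^ n - q ^ (d + i))) / (\<Prod>i<k - d. real (q ^ k - q ^ (d + i)))"
proof -
  have power_diff: "real (q ^ m - q ^ j) = real q ^ j * (real q ^ (m - j) - 1)" if "j \<le> m" for j m
  proof -
    have "q ^ j \<le> q ^ m" using q that by (intro power_increasing) auto
    then have "real (q ^ m - q ^ j) = real q ^ m - real q ^ j" by simp
    also have "real q ^ m = real q ^ j * real q ^ (m - j)" using that by (simp flip: power_add)
    finally show ?thesis by (simp add: algebra_simps)
  qed
  have "real (q ^ n - q ^ (d + i)) / real (q ^ k - q ^ (d + i))
      = (real q ^ (n - d - i) - 1) / (real q ^ (k - d - i) - 1)" if "i < k - d" for i
  proof -
    have "d + i \<le> n" "d + i \<le> k" using that assms by auto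
    then have "real (q ^ n - q ^ (d + i)) / real (q ^ k - q ^ (d + i))
      = (real q ^ (d + i) * (real q ^ (n - (d + i)) - 1))
        / (real q ^ (d + i) * (real q ^ (k - (d + i)) - 1))"
      by (simp only: power_diff)
    then show ?thesis using q by (simp add: diff_diff_add)
  qed
  then show ?thesis
    unfolding gaussian_binom_def prod_dividef[symmetric] by (intro prod.cong refl) simp
qed

context vector_space
begin

lemma span_eq_image_combinations:
  assumes "finite B"
  shows "span B = (\<lambda>u. \<Sum>v\<in>B. scale (u v) v) ` (B \<rightarrow>\<^sub>E UNIV)"
proof
  show "span B \<subseteq> (\<lambda>u. \<Sum>v\<in>B. scale (u v) v) ` (B \<rightarrow>\<^sub>E UNIV)"
  proof
    fix x assume "x \<in> span B"
    then obtain u where "x = (\<Sum>v\<in>B. scale (u v) v)" using span_finite[OF assms] by auto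
    then show "x \<in> (\<lambda>u. \<Sum>v\<in>B. scale (u v) v) ` (B \<rightarrow>\<^sub>E UNIV)"
      by (intro image_eqI[of _ _ "restrict u B"]) auto
  qed
  show "(\<lambda>u. \<Sum>v\<in>B. scale (u v) v) ` (B \<rightarrow>\<^sub>E UNIV) \<subseteq> span B"
    by (auto intro: span_sum span_scale span_base)
qed

lemma span_insert_scale:
  assumes "c \<noteq> 0"
  shows "span (insert (scale c x) A) = span (insert x A)"
proof (subst span_eq, intro conjI)
  show "insert (scale c x) A \<subseteq> span (insert x A)"
    by (auto intro: span_base span_scale)
  have "x = scale (inverse c) (scale c x)" using assms by simp
  then have "x \<in> span (insert (scale c x) A)" by (metis insertI1 span_base span_scale)
  then show "insert x A \<subseteq> span (insert (scale c x) A)" by (auto intro: span_base)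
qed

lemma span_Un_insert_span:
  "span (span (insert x U) \<union> S) = span (insert x (U \<union> S))"
proof (subst span_eq, intro conjI)
  have "span (insert x U) \<subseteq> span (insert x (U \<union> S))" by (rule span_mono) auto
  then show "span (insert x U) \<union> S \<subseteq> span (insert x (U \<union> S))"
    by (auto intro: span_base)
  show "insert x (U \<union> S) \<subseteq> span (span (insert x U) \<union> S)"
    by (auto intro: span_base)
qed

end

context finite_dimensional_vector_space
begin

lemma dim_span_insert_notin:
  assumes "subspace U" and "x \<notin> U"
  shows "dim (span (insert x U)) = dim U + 1"
proof -
  have "x \<notin> span U" unfolding span_eq_iff[THEN iffD2, OF assms(1)] by (fact assms(2))
  then show ?thesis by (simp add: dim_insert)
qed

lemma subspaces_inter_nontrivial:
  assumes "subspace F" "subspace P" "subspace H" "P \<subseteq> F" "H \<subseteq> F"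
    and "dim F < dim P + dim H"
  obtains x where "x \<in> P" "x \<in> H" "x \<noteq> 0"
proof -
  have "{x + y |x y. x \<in> P \<and> y \<in> H} \<subseteq> F"
    using assms(4,5) by (auto intro!: subspace_add[OF assms(1)])
  then have "dim {x + y |x y. x \<in> P \<and> y \<in> H} \<le> dim F" by (rule dim_subset)
  then have "dim (P \<inter> H) \<noteq> 0" using dim_sums_Int[OF assms(2,3)] assms(6) by linarith
  then have "\<not> P \<inter> H \<subseteq> {0}" by simp
  then show ?thesis using that by blast
qed

lemma obtain_subspace_inter_trivial:
  assumes A: "subspace A" and F: "subspace F" and r: "dim (A \<inter> F) + r \<le> dim F"
  obtains P where "subspace P" "P \<subseteq> F" "dim P = r" "P \<inter> A \<subseteq> {0}"
proof -
  obtain BA where BA: "BA \<subseteq> A \<inter> F" "independent BA" "span BA = A \<inter> F"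
    "card BA = dim (A \<inter> F)"
    using basis_subspace_exists[OF subspace_inter[OF A F]] by metis
  obtain BF where BF: "BA \<subseteq> BF" "BF \<subseteq> F" "independent BF" "F \<subseteq> span BF"
    using maximal_independent_subset_extend[of BA F] BA by blast
  have "finite BF" using BF(3) by (rule finiteI_independent)
  moreover have "card BF = dim F" using basis_card_eq_dim BF(2-4) by blast
  ultimately have "r \<le> card (BF - BA)"
    using card_Diff_subset[OF finite_subset[OF BF(1)] BF(1)] BA(4) r by simp
  then obtain S where S: "S \<subseteq> BF - BA" "card S = r"
    using obtain_subset_with_card_n by metis
  have indS: "independent S" and indSBA: "independent (S \<union> BA)"
    using S BF independent_mono[OF BF(3)] by blast+
  have "dim (span S \<inter> span BA) = 0"
  proof -
    have "card (S \<union> BA) = card S + card BA"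
      using S finiteI_independent[OF indSBA] by (intro card_Un_disjoint) auto
    then have "dim {x + y |x y. x \<in> span S \<and> y \<in> span BA} = dim (span S) + dim (span BA)"
      using indS BA(2) indSBA by (simp add: span_Un[symmetric] dim_eq_card_independent)
    then show ?thesis using dim_sums_Int[OF subspace_span[of S] subspace_span[of BA]] by linarith
  qed
  then have "span S \<inter> A \<subseteq> {0}" using BA(3) span_minimal[of S F] S BF(2) F by auto
  moreover have "span S \<subseteq> F" using S BF(2) F by (intro span_minimal) auto
  ultimately show ?thesis using that[of "span S"] indS S(2) by (simp add: dim_eq_card_independent)
qed

end

locale finite_field_vector_space = finite_dimensional_vector_space +
  assumes finite_scalars: "finite (UNIV :: 'a set)"
begin

lemma finite_vectors:
  "finite (S :: 'b set)"
proof -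
  have "finite (span Basis)"
    using finite_scalars finite_Basis by (simp add: span_eq_image_combinations finite_PiE)
  then show ?thesis by (metis span_Basis finite_subset subset_UNIV)
qed

lemma finite_vector_sets: "finite (\<W> :: 'b set set)"
  using finite_vectors finite_Pow_iff[of "UNIV :: 'b set"] by (metis Pow_UNIV finite_subset subset_UNIV)

lemma card_span_independent:
  assumes "independent B"
  shows "card (span B) = CARD('a) ^ card B"
proof -
  let ?comb = "\<lambda>u. \<Sum>v\<in>B. scale (u v) v"
  have B: "finite B" using assms by (rule finiteI_independent)
  have "inj_on ?comb (B \<rightarrow>\<^sub>E UNIV)"
  proof (rule inj_onI)
    fix u w assume u: "u \<in> B \<rightarrow>\<^sub>E UNIV" and w: "w \<in> B \<rightarrow>\<^sub>E UNIV"
      and "?comb u = ?comb w"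
    then have "(\<Sum>v\<in>B. scale (u v - w v) v) = 0"
      by (simp add: scale_left_diff_distrib sum_subtractf)
    then have "\<forall>v\<in>B. u v - w v = 0"
      using assms unfolding independent_explicit by (elim conjE allE[of _ "\<lambda>v. u v - w v"]) blast
    then show "u = w" using u w by (auto intro: PiE_ext)
  qed
  then have "card (span B) = card (B \<rightarrow>\<^sub>E (UNIV :: 'a set))"
    by (simp add: span_eq_image_combinations[OF B] card_image)
  then show ?thesis by (simp add: card_PiE B)
qed

lemma card_subspace:
  assumes "subspace S"
  shows "card S = CARD('a) ^ dim S"
proof -
  obtain B where "independent B" "span B = S" "card B = dim S"
    using basis_subspace_exists[OF assms] by metis
  then show ?thesis using card_span_independent by metis
qed

primrec independent_extensions :: "'b set \<Rightarrow> 'b set \<Rightarrow> nat \<Rightarrow> 'b list set" where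
  "independent_extensions U S 0 = {[]}"
| "independent_extensions U S (Suc r) =
     (\<Union>x\<in>S - U. (#) x ` independent_extensions (span (insert x U)) S r)"

lemma independent_extensions_mono:
  "S \<subseteq> T \<Longrightarrow> independent_extensions U S r \<subseteq> independent_extensions U T r"
  by (induction r arbitrary: U) auto

lemma finite_independent_extensions: "finite (independent_extensions U S r)"
  by (induction r arbitrary: U) (simp_all add: finite_vectors)

lemma dim_span_independent_extension:
  assumes "subspace U" and "xs \<in> independent_extensions U S r"
  shows "set xs \<subseteq> S \<and> dim (span (U \<union> set xs)) = dim U + r"
  using assms
proof (induction r arbitrary: U xs)
  case 0
  then show ?case by simp
next
  case (Suc r)
  then obtain x ys where xs: "xs = x # ys" and x: "x \<in> S - U"
    and ys: "ys \<in> independent_extensions (span (insert x U)) S r" by auto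
  have "set ys \<subseteq> S"
    and "dim (span (span (insert x U) \<union> set ys)) = dim (span (insert x U)) + r"
    using Suc.IH[OF subspace_span ys] by auto
  then show ?case
    using x dim_span_insert_notin[OF Suc.prems(1)] by (simp add: xs span_Un_insert_span)
qed

lemma card_independent_extensions:
  assumes "subspace U" "subspace S" "U \<subseteq> S" "dim U + r \<le> dim S"
  shows "card (independent_extensions U S r) = (\<Prod>i<r. CARD('a) ^ dim S - CARD('a) ^ (dim U + i))"
  using assms
proof (induction r arbitrary: U)
  case 0
  then show ?case by simp
next
  case (Suc r)
  let ?q = "CARD('a)"
  let ?ext = "\<lambda>x. independent_extensions (span (insert x U)) S r"
  have card_ext: "card (?ext x) = (\<Prod>i<r. ?q ^ dim S - ?q ^ (dim U + Suc i))" if x: "x \<in> S - U" for x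
  proof -
    have "dim (span (insert x U)) = dim U + 1"
      using dim_span_insert_notin[OF Suc.prems(1)] x by blast
    moreover have "span (insert x U) \<subseteq> S"
      using x Suc.prems(2,3) by (intro span_minimal) auto
    ultimately show ?thesis using Suc.IH[of "span (insert x U)"] Suc.prems by simp
  qed
  have "card (independent_extensions U S (Suc r)) = (\<Sum>x\<in>S - U. card ((#) x ` ?ext x))"
    unfolding independent_extensions.simps
    by (rule card_UN_disjoint) (auto simp: finite_vectors finite_independent_extensions)
  also have "\<dots> = (\<Sum>x\<in>S - U. \<Prod>i<r. ?q ^ dim S - ?q ^ (dim U + Suc i))"
    by (rule sum.cong) (simp_all add: card_image card_ext)
  also have "card (S - U) = ?q ^ dim S - ?q ^ dim U"
    using card_Diff_subset[OF finite_vectors Suc.prems(3)]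
    by (simp add: card_subspace Suc.prems(1,2))
  then have "(\<Sum>x\<in>S - U. \<Prod>i<r. ?q ^ dim S - ?q ^ (dim U + Suc i))
      = (?q ^ dim S - ?q ^ (dim U + 0)) * (\<Prod>i<r. ?q ^ dim S - ?q ^ (dim U + Suc i))"
    by simp
  also have "\<dots> = (\<Prod>i<Suc r. ?q ^ dim S - ?q ^ (dim U + i))"
    by (simp only: prod.lessThan_Suc_shift)
  finally show ?case .
qed

lemma card_superspaces_mult_le:
  assumes A: "subspace A" and "dim A \<le> k" "k \<le> dim (UNIV :: 'b set)"
  shows "card {W. subspace W \<and> dim W = k \<and> A \<subseteq> W}
      * (\<Prod>i<k - dim A. CARD('a) ^ k - CARD('a) ^ (dim A + i))
    \<le> (\<Prod>i<k - dim A. CARD('a) ^ dim (UNIV :: 'b set) - CARD('a) ^ (dim A + i))"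
proof -
  \<comment> \<open>Double counting: every k-space W through A is spanned by A together with any
    independent extension of A inside W.\<close>
  let ?ext = "\<lambda>S. independent_extensions A S (k - dim A)"
  have "card {W. subspace W \<and> dim W = k \<and> A \<subseteq> W}
      * (\<Prod>i<k - dim A. CARD('a) ^ k - CARD('a) ^ (dim A + i)) \<le> card (?ext UNIV)"
  proof (rule card_mult_le_of_fibres_ge[where f = "\<lambda>xs. span (A \<union> set xs)"])
    fix W assume W: "W \<in> {W. subspace W \<and> dim W = k \<and> A \<subseteq> W}"
    have "?ext W \<subseteq> {xs \<in> ?ext UNIV. span (A \<union> set xs) = W}"
    proof
      fix xs assume xs: "xs \<in> ?ext W"
      then have "set xs \<subseteq> W" "dim (span (A \<union> set xs)) = k"
        using dim_span_independent_extension[OF A] assms(2) by auto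
      moreover from this(1) have "span (A \<union> set xs) \<subseteq> W"
        using W by (intro span_minimal) auto
      ultimately have "span (A \<union> set xs) = W"
        using W by (intro subspace_dim_equal subspace_span) auto
      then show "xs \<in> {xs \<in> ?ext UNIV. span (A \<union> set xs) = W}"
        using xs independent_extensions_mono[of W UNIV] by auto
    qed
    then have "card (?ext W) \<le> card {xs \<in> ?ext UNIV. span (A \<union> set xs) = W}"
      by (intro card_mono) (simp_all add: finite_independent_extensions)
    moreover have "card (?ext W) = (\<Prod>i<k - dim A. CARD('a) ^ k - CARD('a) ^ (dim A + i))"
      using W card_independent_extensions[OF A, of W "k - dim A"] assms(2) by simp
    ultimately show "(\<Prod>i<k - dim A. CARD('a) ^ k - CARD('a) ^ (dim A + i))
        \<le> card {xs \<in> ?ext UNIV. span (A \<union> set xs) = W}"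
      by simp
  qed (simp_all add: finite_independent_extensions finite_vector_sets)
  also have "card (?ext UNIV)
      = (\<Prod>i<k - dim A. CARD('a) ^ dim (UNIV :: 'b set) - CARD('a) ^ (dim A + i))"
    using card_independent_extensions[OF A subspace_UNIV] assms by simp
  finally show ?thesis .
qed

lemma card_superspaces_le_gaussian_binom:
  assumes A: "subspace A" and "dim A \<le> k" "k \<le> dim (UNIV :: 'b set)"
  shows "real (card {W. subspace W \<and> dim W = k \<and> A \<subseteq> W})
    \<le> gaussian_binom CARD('a) (dim (UNIV :: 'b set) - dim A) (k - dim A)"
proof -
  let ?q = "CARD('a)"
  have q: "?q \<ge> 2" using finite_scalars by (rule card_field_ge_2)
  have "?q ^ (dim A + i) < ?q ^ k" if "i < k - dim A" for i
    using q that by (intro power_strict_increasing) auto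
  then have pos: "(\<Prod>i<k - dim A. real (?q ^ k - ?q ^ (dim A + i))) > 0"
    by (intro prod_pos) simp
  have "real (card {W. subspace W \<and> dim W = k \<and> A \<subseteq> W})
      * (\<Prod>i<k - dim A. real (?q ^ k - ?q ^ (dim A + i)))
      \<le> (\<Prod>i<k - dim A. real (?q ^ dim (UNIV :: 'b set) - ?q ^ (dim A + i)))"
    using card_superspaces_mult_le[OF assms] of_nat_mono by (fastforce simp: of_nat_prod)
  then show ?thesis
    unfolding gaussian_binom_eq_prod_quotient[OF q assms(2,3)] using pos by (simp add: pos_le_divide_eq)
qed

lemma card_image_nonzero_le_lines:
  assumes P: "subspace P"
    and f: "\<And>c x. c \<noteq> 0 \<Longrightarrow> x \<in> P \<Longrightarrow> f (scale c x) = f x"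
  shows "real (card (f ` (P - {0}))) \<le> gaussian_binom CARD('a) (dim P) 1"
proof -
  let ?q = "CARD('a)"
  have q: "?q \<ge> 2" using finite_scalars by (rule card_field_ge_2)
  have "card (f ` (P - {0})) * (?q - 1) \<le> card (P - {0})"
  proof (rule card_mult_le_of_fibres_ge[where f = f])
    fix y assume "y \<in> f ` (P - {0})"
    then obtain x where x: "x \<in> P" "x \<noteq> 0" and y: "y = f x" by blast
    have "(\<lambda>c. scale c x) ` (UNIV - {0}) \<subseteq> {z \<in> P - {0}. f z = y}"
      using x y f subspace_scale[OF P] by auto
    then have "card ((\<lambda>c. scale c x) ` (UNIV - {0})) \<le> card {z \<in> P - {0}. f z = y}"
      by (rule card_mono[OF finite_vectors])
    moreover have "inj_on (\<lambda>c. scale c x) (UNIV - {0})" using x by (auto intro: inj_onI)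
    ultimately show "?q - 1 \<le> card {z \<in> P - {0}. f z = y}"
      using finite_scalars by (simp add: card_image card_Diff_singleton)
  qed (simp_all add: finite_vectors)
  also have "card (P - {0}) = ?q ^ dim P - 1"
    using card_subspace[OF P] subspace_0[OF P] finite_vectors by (simp add: card_Diff_singleton)
  finally have "real (card (f ` (P - {0})) * (?q - 1)) \<le> real (?q ^ dim P - 1)"
    by (rule of_nat_mono)
  moreover have "1 \<le> ?q ^ dim P" using q by simp
  ultimately have "real (card (f ` (P - {0}))) * (real ?q - 1) \<le> real ?q ^ dim P - 1"
    using q by simp
  then show ?thesis unfolding gaussian_binom_1 using q by (simp add: pos_le_divide_eq)
qed

end


interpretation vec:
  finite_field_vector_space "(*s) :: 'a::{field,finite} \<Rightarrow> 'a ^ 'n \<Rightarrow> 'a ^ 'n" cart_basis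
  by (intro finite_field_vector_space.intro vec.finite_dimensional_vector_space_axioms
      finite_field_vector_space_axioms.intro) simp

lemma tau_le_dim_of_cover: "is_t_cover t \<F> W \<Longrightarrow> tau t \<F> \<le> vec.dim W"
  unfolding tau_def by (rule Least_le) blast

lemma card_family_containing_le_superspaces:
  fixes \<F> :: "('a::{field,finite} ^ 'n) set set"
  assumes "\<F> \<subseteq> subspaces_of_dim k" and "vec.subspace A" "vec.dim A \<le> k" "k \<le> CARD('n)"
  shows "real (card (family_containing \<F> A))
    \<le> gaussian_binom CARD('a) (CARD('n) - vec.dim A) (k - vec.dim A)"
proof -
  have "family_containing \<F> A \<subseteq> {W. vec.subspace W \<and> vec.dim W = k \<and> A \<subseteq> W}"
    using assms(1) unfolding family_containing_def subspaces_of_dim_def by auto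
  then have "card (family_containing \<F> A)
      \<le> card {W. vec.subspace W \<and> vec.dim W = k \<and> A \<subseteq> W}"
    by (intro card_mono) simp_all
  then show ?thesis
    using vec.card_superspaces_le_gaussian_binom[OF assms(2,3)] assms(4)
    by (simp add: card_cart_basis)
qed

lemma family_containing_subset_lines:
  fixes \<F> :: "('a::field ^ 'n) set set"
  assumes Fk: "\<F> \<subseteq> subspaces_of_dim k" and F0: "F0 \<in> \<F>"
    and P: "vec.subspace P" "P \<subseteq> F0" "k < vec.dim P + t"
  shows "family_containing \<F> A \<subseteq> {G \<in> \<F>. vec.dim (F0 \<inter> G) < t}
    \<union> (\<Union>x\<in>P - {0}. family_containing \<F> (vec.span (insert x A)))"
proof
  fix G assume G: "G \<in> family_containing \<F> A"
  then have GF: "G \<in> \<F>" and AG: "A \<subseteq> G" unfolding family_containing_def by auto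
  have "vec.subspace G" "vec.subspace F0" "vec.dim F0 = k"
    using GF F0 Fk unfolding subspaces_of_dim_def by auto
  show "G \<in> {G \<in> \<F>. vec.dim (F0 \<inter> G) < t}
      \<union> (\<Union>x\<in>P - {0}. family_containing \<F> (vec.span (insert x A)))"
  proof (cases "vec.dim (F0 \<inter> G) < t")
    case True
    then show ?thesis using GF by blast
  next
    case False
    have "vec.subspace (F0 \<inter> G)"
      using \<open>vec.subspace F0\<close> \<open>vec.subspace G\<close> by (rule vec.subspace_inter)
    moreover have "vec.dim F0 < vec.dim P + vec.dim (F0 \<inter> G)"
      using False P(3) \<open>vec.dim F0 = k\<close> by linarith
    ultimately obtain x where "x \<in> P" "x \<in> F0 \<inter> G" "x \<noteq> 0"
      using vec.subspaces_inter_nontrivial[of F0 P "F0 \<inter> G"] P(1,2) \<open>vec.subspace F0\<close> by blast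
    moreover have "vec.span (insert x A) \<subseteq> G"
      using \<open>x \<in> F0 \<inter> G\<close> AG \<open>vec.subspace G\<close> by (intro vec.span_minimal) auto
    ultimately show ?thesis using GF unfolding family_containing_def by blast
  qed
qed

lemma card_family_containing_le_recursion:
  fixes \<F> :: "('a::{field,finite} ^ 'n) set set"
  assumes Fk: "\<F> \<subseteq> subspaces_of_dim k" and alm: "almost_t_intersecting t \<F>" and "t \<le> k"
    and A: "vec.subspace A" and not_cover: "\<not> is_t_cover t \<F> A"
    and b: "\<And>B. vec.subspace B \<Longrightarrow> vec.dim B = vec.dim A + 1
      \<Longrightarrow> real (card (family_containing \<F> B)) \<le> b"
    and "b \<ge> 0"
  shows "real (card (family_containing \<F> A)) \<le> 1 + gaussian_binom CARD('a) (k - t + 1) 1 * b"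
proof -
  obtain F0 where F0: "F0 \<in> \<F>" and "vec.dim (A \<inter> F0) < t"
    using not_cover A unfolding is_t_cover_def by (auto simp: not_le)
  moreover have "vec.subspace F0" "vec.dim F0 = k" using F0 Fk unfolding subspaces_of_dim_def by auto
  moreover have "vec.dim (A \<inter> F0) + (k - t + 1) \<le> vec.dim F0"
    using \<open>vec.dim (A \<inter> F0) < t\<close> \<open>vec.dim F0 = k\<close> \<open>t \<le> k\<close> by linarith
  ultimately obtain P
    where P: "vec.subspace P" "P \<subseteq> F0" "vec.dim P = k - t + 1" "P \<inter> A \<subseteq> {0}"
    using vec.obtain_subspace_inter_trivial[OF A] by blast
  let ?line = "\<lambda>x. vec.span (insert x A)"
  let ?L = "?line ` (P - {0})"
  let ?E = "{G \<in> \<F>. vec.dim (F0 \<inter> G) < t}"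
  have "card ?E \<le> 1" using alm F0 unfolding almost_t_intersecting_def by blast
  have "real (card (family_containing \<F> (?line x))) \<le> b" if "x \<in> P - {0}" for x
  proof -
    have "x \<notin> A" using that P(4) by blast
    then show ?thesis by (rule b[OF vec.subspace_span vec.dim_span_insert_notin[OF A]])
  qed
  then have "(\<Sum>B\<in>?L. real (card (family_containing \<F> B))) \<le> card ?L * b"
    by (intro sum_bounded_above) auto
  also have "\<dots> \<le> gaussian_binom CARD('a) (k - t + 1) 1 * b"
    using vec.card_image_nonzero_le_lines[OF P(1), of ?line] P(3) \<open>b \<ge> 0\<close>
    by (intro mult_right_mono) (simp_all add: vec.span_insert_scale)
  finally have lines: "(\<Sum>B\<in>?L. real (card (family_containing \<F> B)))
      \<le> gaussian_binom CARD('a) (k - t + 1) 1 * b" .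
  have "family_containing \<F> A \<subseteq> ?E \<union> (\<Union>B\<in>?L. family_containing \<F> B)"
    using family_containing_subset_lines[OF Fk F0 P(1,2), where A = A] P(3) \<open>t \<le> k\<close> by simp
  then have "card (family_containing \<F> A) \<le> card (?E \<union> (\<Union>B\<in>?L. family_containing \<F> B))"
    by (intro card_mono) simp_all
  also have "\<dots> \<le> card ?E + card (\<Union>B\<in>?L. family_containing \<F> B)"
    by (rule card_Un_le)
  also have "\<dots> \<le> 1 + (\<Sum>B\<in>?L. card (family_containing \<F> B))"
    using \<open>card ?E \<le> 1\<close> card_UN_le[of ?L "family_containing \<F>"] by auto
  finally have "real (card (family_containing \<F> A))
      \<le> real (1 + (\<Sum>B\<in>?L. card (family_containing \<F> B)))"
    by (rule of_nat_mono)
  with lines show ?thesis by (simp add: of_nat_sum)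
qed

lemma card_family_containing_le:
  fixes \<F> :: "('a::{field,finite} ^ 'n) set set"
  assumes Fk: "\<F> \<subseteq> subspaces_of_dim k" and alm: "almost_t_intersecting t \<F>"
    and "t \<le> k" "tau t \<F> \<le> k" "k \<le> CARD('n)"
    and "vec.subspace A" "vec.dim A + m = tau t \<F>"
  shows "real (card (family_containing \<F> A))
    \<le> gaussian_binom CARD('a) (k - t + 1) 1 ^ m
        * gaussian_binom CARD('a) (CARD('n) - tau t \<F>) (k - tau t \<F>)
      + (\<Sum>i<m. gaussian_binom CARD('a) (k - t + 1) 1 ^ i)"
  using assms(6,7)
proof (induction m arbitrary: A)
  case 0
  then have "vec.dim A = tau t \<F>" by simp
  then show ?case using card_family_containing_le_superspaces[OF Fk 0(1)] assms(4,5) by simp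
next
  case (Suc m A)
  let ?c = "gaussian_binom CARD('a) (k - t + 1) 1"
  let ?g = "gaussian_binom CARD('a) (CARD('n) - tau t \<F>) (k - tau t \<F>)"
  have "?c \<ge> 0" "?g \<ge> 0" by (simp_all add: gaussian_binom_nonneg)
  have "\<not> is_t_cover t \<F> A" using tau_le_dim_of_cover Suc.prems by fastforce
  then have "real (card (family_containing \<F> A)) \<le> 1 + ?c * (?c ^ m * ?g + (\<Sum>i<m. ?c ^ i))"
    using card_family_containing_le_recursion[OF Fk alm \<open>t \<le> k\<close> Suc.prems(1)] Suc.IH Suc.prems
      \<open>?c \<ge> 0\<close> \<open>?g \<ge> 0\<close> by (simp add: sum_nonneg)
  also have "\<dots> = ?c ^ Suc m * ?g + (\<Sum>i<Suc m. ?c ^ i)"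
    by (simp add: sum.lessThan_Suc_shift sum_distrib_left algebra_simps del: sum.lessThan_Suc)
  finally show ?case .
qed

theorem corollary3p4:
  fixes \<F> :: "('a::{field,finite} ^ 'n) set set"
    and A :: "('a ^ 'n) set"
    and n k t :: nat
  assumes "n = CARD('n)"
    and "0 < t" and "0 < k" and "k \<ge> t + 1" and "n \<ge> 2 * k"
    and "\<F> \<subseteq> subspaces_of_dim k"
    and "almost_t_intersecting t \<F>"
    and "vec.subspace A"
    and "vec.dim A < tau t \<F>" and "tau t \<F> \<le> k"
  shows "real (card (family_containing \<F> A))
    \<le> gaussian_binom CARD('a) (k - t + 1) 1 ^ (tau t \<F> - vec.dim A)
        * gaussian_binom CARD('a) (n - tau t \<F>) (k - tau t \<F>)
      + (\<Sum>i=0..tau t \<F> - vec.dim A - 1. gaussian_binom CARD('a) (k - t + 1) 1 ^ i)"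
proof -
  have "t \<le> k" "k \<le> CARD('n)" using assms(1,4,5) by simp_all
  moreover have "{0..tau t \<F> - vec.dim A - 1} = {..<tau t \<F> - vec.dim A}" using assms(9) by auto
  ultimately show ?thesis
    using card_family_containing_le[OF assms(6,7) _ assms(10) _ assms(8), of "tau t \<F> - vec.dim A"]
      assms(1,9) by simp
qed

end
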